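(* Let $n,s,t$ be nonnegative integers with $n\ge 2$, and let $U=\{1,\dots,n\}$. Let $R$ be a relation between subsets of $U$ and bit strings of length $n+s$ (the representations of a systematic data structure) such that every $S\subseteq U$ has at least one representation $B$ with $(S,B)\in R$, and whenever $(S,B)\in R$ with $B=(B_1,\dots,B_{n+s})$, we have $B_\ell=1\iff\ell\in S$ for $\ell=1,\dots,n$. Assume that for each $r\in\{1,\dots,n\}$ there is an adaptive bit-probe algorithm (a deterministic decision tree that queries individual bits of its input) which, for every $S\subseteq U$ with $|S|=r$ and every $B$ with $(S,B)\in R$, probes at most $rt$ bits of $B$ and outputs $S$ (i.e., distinguishes among the $\binom{n}{r}$ subsets of size $r$). Then $$\Big(s+\frac{1}{\ln 2}\Big)t\ \ge\ \frac{n}{e\ln 2},$$ and, if $s>0$, $st\ge n/2$. *)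

theory Defs
  imports Complex_Main
begin

text \<open>A node Probe i t0 t1 probes bit position i (1-based, i.e. list entry i-1)
  of the input bit string and continues in t0 if the bit is 0 (False), in t1 if it is 1.\<close>
datatype 'a dtree = Out 'a | Probe nat "'a dtree" "'a dtree"

fun dt_out :: "'a dtree \<Rightarrow> bool list \<Rightarrow> 'a" where
  "dt_out (Out x) B = x"
| "dt_out (Probe i t0 t1) B = (if B ! (i - 1) then dt_out t1 B else dt_out t0 B)"

fun dt_probes :: "'a dtree \<Rightarrow> bool list \<Rightarrow> nat" where
  "dt_probes (Out x) B = 0"
| "dt_probes (Probe i t0 t1) B = Suc (if B ! (i - 1) then dt_probes t1 B else dt_probes t0 B)"

end

theory Submission
  imports Defs
begin

text \<open>Fix r and a decision tree that identifies every r-subset with at most k = r t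
  probes. Since the first n bits are the characteristic vector of the set, at most r of
  the probes along a computation path can read a data bit that is 1, and at most s of them
  can read a redundant bit. Counting the leaves reachable under these two constraints gives
  \<open>(n choose r) \<le> 2^s * (k - s + r choose r)\<close>. As
  \<open>(n choose r) / (K choose r) \<ge> (n / K)^r\<close>, this forces \<open>n \<le> c K\<close> for
  \<open>K = k - s + r\<close> whenever \<open>2^s \<le> c^r\<close>; the choices \<open>r = \<lfloor>s ln 2\<rfloor> + 1\<close>,
  \<open>c = e\<close> and \<open>r = s\<close>, \<open>c = 2\<close> give the two bounds.\<close>

definition agree_outside :: "nat set \<Rightarrow> bool list set \<Rightarrow> bool" where
  "agree_outside P X \<longleftrightarrow> (\<forall>B\<in>X. \<forall>B'\<in>X. \<forall>q. q \<notin> P \<longrightarrow> B ! q = B' ! q)"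

lemma agree_outside_restrict:
  assumes agree: "agree_outside P X" and sub: "P - {q} \<subseteq> P'"
  shows "agree_outside P' {B\<in>X. B ! q}" and "agree_outside P' {B\<in>X. \<not> B ! q}"
proof -
  have "B ! p = B' ! p" if "B \<in> X" "B' \<in> X" "B ! q = B' ! q" "p \<notin> P'" for B B' p
  proof (cases "p = q")
    case False
    then show ?thesis using agree sub that unfolding agree_outside_def by blast
  qed (use that in simp)
  then show "agree_outside P' {B\<in>X. B ! q}" and "agree_outside P' {B\<in>X. \<not> B ! q}"
    unfolding agree_outside_def by blast+
qed

text \<open>The bound satisfies the recursion of the leaf count of a tree with k probes left,
  at most a ones among the unread data bits and b unread redundant bits: a data probe
  leads to (k - 1, a) and (k - 1, a - 1), a redundant probe twice to (k - 1, b - 1).\<close>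

definition probe_bound :: "nat \<Rightarrow> nat \<Rightarrow> nat \<Rightarrow> nat" where
  "probe_bound k a b = 2 ^ min b k * (k - min b k + a choose a)"

lemma probe_bound_pos: "0 < probe_bound k a b"
  by (simp add: probe_bound_def zero_less_binomial)

lemma probe_bound_0 [simp]: "probe_bound 0 a b = 1"
  by (simp add: probe_bound_def)

lemma probe_bound_Suc: "probe_bound k a b \<le> probe_bound (Suc k) a b"
proof (cases "b \<le> k")
  case True
  then show ?thesis
    by (simp add: probe_bound_def min_def Suc_diff_le binomial_right_mono)
qed (simp add: probe_bound_def min_def)

lemma probe_bound_Suc_data:
  assumes "0 < a"
  shows "probe_bound k a b + probe_bound k (a - 1) b \<le> probe_bound (Suc k) a b"
proof -
  obtain a' where a: "a = Suc a'" using assms by (cases a) auto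
  show ?thesis
  proof (cases "b \<le> k")
    case True
    define m where "m = k - b"
    have "probe_bound k a b = 2 ^ b * (m + a choose a)"
      and "probe_bound k (a - 1) b = 2 ^ b * (m + a' choose a')"
      and "probe_bound (Suc k) a b = 2 ^ b * ((m + a choose a) + (m + a choose a'))"
      using True by (simp_all add: probe_bound_def min_def m_def a Suc_diff_le)
    moreover have "(m + a' choose a') \<le> (m + a choose a')" by (rule binomial_right_mono) (simp add: a)
    ultimately show ?thesis by (simp add: distrib_left)
  qed (simp add: probe_bound_def a)
qed

lemma probe_bound_Suc_redundant:
  assumes "0 < b"
  shows "2 * probe_bound k a (b - 1) \<le> probe_bound (Suc k) a b"
  using assms by (cases b) (simp_all add: probe_bound_def min_def)

lemma probe_bound_le: "probe_bound k a b \<le> 2 ^ b * (k - b + a choose a)"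
  by (cases "b \<le> k") (simp_all add: probe_bound_def min_def)

lemma card_dt_out_Probe_le:
  "card (dt_out (Probe i t0 t1) ` X)
     \<le> card (dt_out t1 ` {B\<in>X. B ! (i - 1)}) + card (dt_out t0 ` {B\<in>X. \<not> B ! (i - 1)})"
proof -
  have "dt_out (Probe i t0 t1) ` X
          = dt_out t1 ` {B\<in>X. B ! (i - 1)} \<union> dt_out t0 ` {B\<in>X. \<not> B ! (i - 1)}"
    by (auto simp: image_iff)
  then show ?thesis by (simp add: card_Un_le)
qed

text \<open>D and F are the data and the redundant positions not yet read along the path
  that leads to the inputs X.\<close>

definition probe_invariant :: "nat set \<Rightarrow> nat set \<Rightarrow> nat \<Rightarrow> nat \<Rightarrow> bool list set \<Rightarrow> bool" where
  "probe_invariant D F a b X \<longleftrightarrow> finite D \<and> finite F \<and> card F \<le> b \<and>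
     agree_outside (D \<union> F) X \<and> (\<forall>B\<in>X. card {q\<in>D. B ! q} \<le> a)"

lemma probe_invariant_subset:
  "probe_invariant D F a b X \<Longrightarrow> Y \<subseteq> X \<Longrightarrow> probe_invariant D F a b Y"
  unfolding probe_invariant_def agree_outside_def by blast

lemma probe_invariant_data:
  assumes inv: "probe_invariant D F a b X" and "q \<in> D"
  shows "probe_invariant (D - {q}) F a b {B\<in>X. \<not> B ! q}"
    and "probe_invariant (D - {q}) F (a - 1) b {B\<in>X. B ! q}"
    and "a = 0 \<Longrightarrow> {B\<in>X. B ! q} = {}"
proof -
  have fin: "finite D" and ones: "\<forall>B\<in>X. card {q\<in>D. B ! q} \<le> a"
    using inv by (simp_all add: probe_invariant_def)
  have agree: "agree_outside (D - {q} \<union> F) {B\<in>X. \<not> B ! q}"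
      "agree_outside (D - {q} \<union> F) {B\<in>X. B ! q}"
    using inv agree_outside_restrict[of "D \<union> F" X q "D - {q} \<union> F"]
    by (auto simp: probe_invariant_def)
  have "card {q'\<in>D - {q}. B ! q'} \<le> card {q'\<in>D. B ! q'}" for B
    using fin by (intro card_mono) auto
  then show "probe_invariant (D - {q}) F a b {B\<in>X. \<not> B ! q}"
    using inv agree(1) ones by (auto simp: probe_invariant_def intro: order_trans)
  have "card {q'\<in>D - {q}. B ! q'} = card {q'\<in>D. B ! q'} - 1" if "B ! q" for B
  proof -
    have "{q'\<in>D - {q}. B ! q'} = {q'\<in>D. B ! q'} - {q}" by auto
    then show ?thesis using that \<open>q \<in> D\<close> fin by (simp add: card_Diff_singleton)
  qed
  then show "probe_invariant (D - {q}) F (a - 1) b {B\<in>X. B ! q}"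
    using inv agree(2) ones by (auto simp: probe_invariant_def diff_le_mono)
  show "{B\<in>X. B ! q} = {}" if "a = 0"
    using ones fin \<open>q \<in> D\<close> that by (force simp: card_eq_0_iff)
qed

lemma probe_invariant_redundant:
  assumes inv: "probe_invariant D F a b X" and "q \<in> F - D"
  shows "0 < b"
    and "probe_invariant D (F - {q}) a (b - 1) {B\<in>X. \<not> B ! q}"
    and "probe_invariant D (F - {q}) a (b - 1) {B\<in>X. B ! q}"
proof -
  have "finite F" "card F \<le> b" using inv by (simp_all add: probe_invariant_def)
  then show "0 < b" using \<open>q \<in> F - D\<close> card_gt_0_iff[of F] by auto
  have "card (F - {q}) \<le> b - 1"
    using \<open>finite F\<close> \<open>card F \<le> b\<close> \<open>q \<in> F - D\<close> by (simp add: card_Diff_singleton)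
  moreover have "agree_outside (D \<union> (F - {q})) {B\<in>X. \<not> B ! q}"
    and "agree_outside (D \<union> (F - {q})) {B\<in>X. B ! q}"
    using inv agree_outside_restrict[of "D \<union> F" X q "D \<union> (F - {q})"]
    by (auto simp: probe_invariant_def)
  ultimately show "probe_invariant D (F - {q}) a (b - 1) {B\<in>X. \<not> B ! q}"
    and "probe_invariant D (F - {q}) a (b - 1) {B\<in>X. B ! q}"
    using inv by (auto simp: probe_invariant_def)
qed

lemma probe_invariant_fixed:
  assumes "probe_invariant D F a b X" and "q \<notin> D \<union> F"
  shows "{B\<in>X. B ! q} = {} \<or> {B\<in>X. \<not> B ! q} = {}"
  using assms unfolding probe_invariant_def agree_outside_def by blast

lemma card_dt_out_le_probe_bound:
  assumes "probe_invariant D F a b X" and "\<forall>B\<in>X. dt_probes T B \<le> k"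
  shows "card (dt_out T ` X) \<le> probe_bound k a b"
  using assms
proof (induction T arbitrary: X D F k a b)
  case (Out x)
  have "card (dt_out (Out x) ` X) \<le> card {x}" by (intro card_mono) auto
  then show ?case using probe_bound_pos[of k a b] by simp
next
  case (Probe i t0 t1)
  define q where "q = i - 1"
  define X0 X1 where "X0 = {B\<in>X. \<not> B ! q}" and "X1 = {B\<in>X. B ! q}"
  show ?case
  proof (cases "X = {}")
    case False
    then obtain k' where k: "k = Suc k'"
      using Probe.prems(2) by (metis dt_probes.simps(2) equals0I not0_implies_Suc le_zero_eq)
    have depth: "\<forall>B\<in>X0. dt_probes t0 B \<le> k'" "\<forall>B\<in>X1. dt_probes t1 B \<le> k'"
      using Probe.prems(2) by (auto simp: X0_def X1_def q_def k)
    have split: "card (dt_out (Probe i t0 t1) ` X) \<le> card (dt_out t1 ` X1) + card (dt_out t0 ` X0)"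
      unfolding X0_def X1_def q_def by (rule card_dt_out_Probe_le)
    consider "q \<in> D" | "q \<in> F - D" | "q \<notin> D \<union> F" by blast
    then show ?thesis
    proof cases
      case 1
      note inv = probe_invariant_data[OF Probe.prems(1) 1, folded X0_def X1_def]
      have c0: "card (dt_out t0 ` X0) \<le> probe_bound k' a b"
        using inv(1) depth(1) by (rule Probe.IH(1))
      show ?thesis
      proof (cases "a = 0")
        case True
        then show ?thesis using split c0 inv(3) probe_bound_Suc[of k' a b] k by simp
      next
        case False
        have "card (dt_out t1 ` X1) \<le> probe_bound k' (a - 1) b"
          using inv(2) depth(2) by (rule Probe.IH(2))
        then show ?thesis using split c0 probe_bound_Suc_data[of a k' b] False k by simp
      qed
    next
      case 2
      note inv = probe_invariant_redundant[OF Probe.prems(1) 2, folded X0_def X1_def]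
      have "card (dt_out t0 ` X0) \<le> probe_bound k' a (b - 1)"
        and "card (dt_out t1 ` X1) \<le> probe_bound k' a (b - 1)"
        using Probe.IH inv(2,3) depth by blast+
      then show ?thesis using split probe_bound_Suc_redundant[OF inv(1), of k' a] k by simp
    next
      case 3
      have "X0 \<subseteq> X" "X1 \<subseteq> X" by (auto simp: X0_def X1_def)
      then have "card (dt_out t0 ` X0) \<le> probe_bound k' a b"
        and "card (dt_out t1 ` X1) \<le> probe_bound k' a b"
        using Probe.IH probe_invariant_subset[OF Probe.prems(1)] depth by blast+
      moreover have "X1 = {} \<or> X0 = {}"
        using probe_invariant_fixed[OF Probe.prems(1) 3] by (simp add: X0_def X1_def)
      ultimately show ?thesis using split probe_bound_Suc[of k' a b] k by auto
    qed
  qed simp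
qed

text \<open>Indexing beyond the end of a list is unspecified, but depends only on how far
  beyond the end the index lies.\<close>

lemma nth_eq_beyond_length:
  "length B = length B' \<Longrightarrow> length B \<le> q \<Longrightarrow> B ! q = B' ! q"
proof (induction B arbitrary: B' q)
  case (Cons x xs)
  then obtain y ys where "B' = y # ys" by (cases B') auto
  moreover obtain q' where "q = Suc q'" using Cons.prems(2) by (cases q) auto
  ultimately show ?case using Cons by simp
qed simp

lemma set_eq_Suc_image_of_characteristic:
  assumes "S \<subseteq> {1..n}" and "\<forall>l\<in>{1..n}. B ! (l - 1) \<longleftrightarrow> l \<in> S"
  shows "S = Suc ` {q\<in>{0..<n}. B ! q}"
proof (intro set_eqI iffI)
  fix l assume "l \<in> S"
  with assms have "l \<in> {1..n}" "B ! (l - 1)" by auto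
  then show "l \<in> Suc ` {q\<in>{0..<n}. B ! q}" by (intro image_eqI[of _ _ "l - 1"]) auto
next
  fix l assume "l \<in> Suc ` {q\<in>{0..<n}. B ! q}"
  with assms(2) show "l \<in> S" by force
qed

lemma binomial_le_probe_bound:
  fixes R :: "nat set \<Rightarrow> bool list \<Rightarrow> bool" and T :: "nat set dtree"
  assumes repr: "\<forall>S B. R S B \<longrightarrow> S \<subseteq> {1..n} \<and> length B = n + s"
    and complete: "\<forall>S. S \<subseteq> {1..n} \<longrightarrow> (\<exists>B. R S B)"
    and systematic: "\<forall>S B. R S B \<longrightarrow> (\<forall>l\<in>{1..n}. B ! (l - 1) \<longleftrightarrow> l \<in> S)"
    and decides: "\<forall>S B. S \<subseteq> {1..n} \<and> card S = r \<and> R S B \<longrightarrow> dt_probes T B \<le> k \<and> dt_out T B = S"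
  shows "n choose r \<le> probe_bound k r s"
proof -
  define X where "X = {B. \<exists>S. S \<subseteq> {1..n} \<and> card S = r \<and> R S B}"
  have set_of_repr: "S = Suc ` {q\<in>{0..<n}. B ! q}" if "R S B" for S B
    using repr systematic that by (intro set_eq_Suc_image_of_characteristic) auto
  have ones: "\<forall>B\<in>X. card {q\<in>{0..<n}. B ! q} \<le> r"
  proof
    fix B assume "B \<in> X"
    then obtain S where "card S = r" "R S B" unfolding X_def by blast
    have "card S = card (Suc ` {q\<in>{0..<n}. B ! q})" using set_of_repr[OF \<open>R S B\<close>] by simp
    then show "card {q\<in>{0..<n}. B ! q} \<le> r" using \<open>card S = r\<close> by (simp add: card_image)
  qed
  have agree: "agree_outside ({0..<n} \<union> {n..<n + s}) X"
    unfolding agree_outside_def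
  proof (intro ballI allI impI)
    fix B B' q assume "B \<in> X" "B' \<in> X" "q \<notin> {0..<n} \<union> {n..<n + s}"
    then show "B ! q = B' ! q"
      using repr by (intro nth_eq_beyond_length) (auto simp: X_def)
  qed
  have "probe_invariant {0..<n} {n..<n + s} r s X"
    using agree ones by (simp add: probe_invariant_def)
  then have "card (dt_out T ` X) \<le> probe_bound k r s"
    by (rule card_dt_out_le_probe_bound) (use decides in \<open>auto simp: X_def\<close>)
  moreover have "dt_out T ` X = {S. S \<subseteq> {1..n} \<and> card S = r}"
  proof (intro equalityI subsetI)
    fix S assume "S \<in> dt_out T ` X"
    then show "S \<in> {S. S \<subseteq> {1..n} \<and> card S = r}" using decides by (auto simp: X_def)
  next
    fix S assume S: "S \<in> {S. S \<subseteq> {1..n} \<and> card S = r}"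
    then obtain B where "R S B" using complete by blast
    then have "B \<in> X" "dt_out T B = S" using S decides by (auto simp: X_def)
    then show "S \<in> dt_out T ` X" by (metis image_eqI)
  qed
  ultimately show ?thesis by (simp add: n_subsets)
qed

lemma binomial_ratio_ge_pow:
  assumes "K \<le> N" "r \<le> K"
  shows "real N ^ r * real (K choose r) \<le> real K ^ r * real (N choose r)"
proof -
  have "real N ^ r * real (K choose r) = (\<Prod>i=0..<r. real N * (real (K - i) / real (r - i)))"
    unfolding prod.distrib binomial_altdef_of_nat[OF \<open>r \<le> K\<close>] by simp
  also have "\<dots> \<le> (\<Prod>i=0..<r. real K * (real (N - i) / real (r - i)))"
  proof (intro prod_mono conjI)
    fix i assume "i \<in> {0..<r}"
    then have "real N * real (K - i) \<le> real K * real (N - i)"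
      using assms by (simp add: of_nat_diff algebra_simps mult_right_mono)
    then show "real N * (real (K - i) / real (r - i)) \<le> real K * (real (N - i) / real (r - i))"
      by (metis divide_right_mono of_nat_0_le_iff times_divide_eq_right)
  qed simp
  also have "\<dots> = real K ^ r * real (N choose r)"
    using assms unfolding prod.distrib binomial_altdef_of_nat[OF le_trans[OF assms(2,1)]] by simp
  finally show ?thesis .
qed

lemma le_mult_of_binomial_le_pow_mult_binomial:
  fixes c :: real
  assumes "1 \<le> r" "r \<le> K" "1 \<le> c"
    and binomial_le: "K \<le> n \<Longrightarrow> real (n choose r) \<le> c ^ r * real (K choose r)"
  shows "real n \<le> c * real K"
proof (cases "K \<le> n")
  case True
  have pos: "0 < real (K choose r)" using assms(2) by (simp add: zero_less_binomial)
  have "real n ^ r * real (K choose r) \<le> real K ^ r * real (n choose r)"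
    using True assms(2) by (rule binomial_ratio_ge_pow)
  also have "\<dots> \<le> real K ^ r * (c ^ r * real (K choose r))"
    using binomial_le[OF True] by (intro mult_left_mono) auto
  also have "\<dots> = (c * real K) ^ r * real (K choose r)"
    by (simp add: power_mult_distrib)
  finally have "real n ^ r \<le> (c * real K) ^ r"
    using pos by simp
  moreover obtain r' where "r = Suc r'" using assms(1) by (cases r) auto
  ultimately have "real n ^ Suc r' \<le> (c * real K) ^ Suc r'" by simp
  then show ?thesis by (rule power_le_imp_le_base) (use assms(3) in simp)
next
  case False
  then have "real n \<le> 1 * real K" by simp
  also have "\<dots> \<le> c * real K" using assms(3) by (rule mult_right_mono) simp
  finally show ?thesis .
qed

lemma exp1_ge_8_3: "8/3 \<le> exp (1::real)"
proof -
  obtain u where "exp (1::real) = (\<Sum>m<4. 1 ^ m / fact m) + exp u / fact 4 * 1 ^ 4"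
    using Maclaurin_exp_le[of 1 4] by auto
  moreover have "(\<Sum>m<4. (1::real) ^ m / fact m) = 8/3" by (simp add: eval_nat_numeral)
  moreover have "0 \<le> exp u / fact 4 * (1::real) ^ 4" by simp
  ultimately show ?thesis by linarith
qed

lemma ln2_ge_two_thirds: "2/3 \<le> ln (2::real)"
proof -
  obtain u where "exp (-2/3::real) = (\<Sum>m<4. (-2/3) ^ m / fact m) + exp u / fact 4 * (-2/3) ^ 4"
    using Maclaurin_exp_le[of "-2/3" 4] by auto
  moreover have "(\<Sum>m<4. (-2/3::real) ^ m / fact m) = 41/81" by (simp add: eval_nat_numeral)
  moreover have "0 \<le> exp u / fact 4 * (-2/3::real) ^ 4" by simp
  ultimately have "1/2 \<le> exp (-2/3::real)" by linarith
  then have "exp (2/3::real) \<le> 2" by (simp add: exp_minus field_simps)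
  then show ?thesis by (metis exp_le_cancel_iff exp_ln zero_less_numeral)
qed

lemma ln2_le_three_quarters: "ln (2::real) \<le> 3/4"
proof -
  have "1 + 3/4 + (3/4)\<^sup>2 / 2 \<le> exp (3/4::real)" by (rule exp_lower_Taylor_quadratic) simp
  then have "2 \<le> exp (3/4::real)" by (simp add: power2_eq_square)
  then show ?thesis by (metis exp_le_cancel_iff exp_ln zero_less_numeral)
qed

lemma real_mult_diff_add_le:
  assumes "1 \<le> t" "real r \<le> x + 1" "x + 1 \<le> real s"
  shows "real (r * t - s + r) \<le> real t * (x + 1)"
proof (cases "s \<le> r * t")
  case True
  have "real r * real t \<le> (x + 1) * real t"
    using assms(2) by (intro mult_right_mono) auto
  then show ?thesis
    using True assms(2,3) by (simp add: of_nat_diff algebra_simps)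
next
  case False
  have "real r * 1 \<le> real r * real t" using assms(1) by (intro mult_left_mono) auto
  also have "\<dots> \<le> (x + 1) * real t" using assms(2) by (intro mult_right_mono) auto
  finally show ?thesis using False by (simp add: algebra_simps)
qed

lemma n_le_exp_mult_of_binomial_bound_small:
  assumes "s \<le> 3" "1 \<le> t" "1 \<le> n"
    and bound: "\<And>r. 1 \<le> r \<Longrightarrow> r \<le> n \<Longrightarrow>
      real (n choose r) \<le> 2 ^ s * real (r * t - s + r choose r)"
  shows "real n \<le> exp 1 * real t * (real s * ln 2 + 1)"
proof -
  have e: "8/3 \<le> exp (1::real)" by (rule exp1_ge_8_3)
  have "2 ^ s * real (t - s + 1) \<le> exp 1 * real t * (real s * ln 2 + 1)"
  proof (cases "s = 0")
    case True
    have "real (t + 1) \<le> 8/3 * real t" using assms(2) by simp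
    also have "\<dots> \<le> exp 1 * real t" using e by (intro mult_right_mono) auto
    finally show ?thesis using True by simp
  next
    case False
    have "s = 1 \<or> s = 2 \<or> s = 3" using False assms(1) by auto
    then have "(2::real) ^ s \<le> 8/3 * (real s * (2/3) + 1)" by auto
    also have "\<dots> \<le> exp 1 * (real s * ln 2 + 1)"
      using e ln2_ge_two_thirds by (intro mult_mono add_right_mono mult_left_mono) auto
    finally have pow_le: "(2::real) ^ s \<le> exp 1 * (real s * ln 2 + 1)" .
    have "2 ^ s * real (t - s + 1) \<le> 2 ^ s * real t"
      using False assms(2) by (intro mult_left_mono) simp_all
    also have "\<dots> \<le> exp 1 * (real s * ln 2 + 1) * real t"
      using pow_le by (rule mult_right_mono) simp
    finally show ?thesis by (simp add: ac_simps)
  qed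
  then show ?thesis using bound[of 1] assms(3) by simp
qed

lemma n_le_exp_mult_of_binomial_bound_large:
  assumes "4 \<le> s" "1 \<le> t"
    and bound: "\<And>r. 1 \<le> r \<Longrightarrow> r \<le> n \<Longrightarrow>
      real (n choose r) \<le> 2 ^ s * real (r * t - s + r choose r)"
  shows "real n \<le> exp 1 * real t * (real s * ln 2 + 1)"
proof -
  define r where "r = nat \<lfloor>real s * ln 2\<rfloor> + 1"
  define K where "K = r * t - s + r"
  have r_gt: "real s * ln 2 < real r" and r_le: "real r \<le> real s * ln 2 + 1"
    unfolding r_def by (simp_all add: of_nat_nat) linarith+
  have "real s * ln 2 \<le> real s * (3/4)"
    using ln2_le_three_quarters by (intro mult_left_mono) auto
  then have "real s * ln 2 + 1 \<le> real s" using assms(1) by linarith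
  with assms(2) r_le have K_le: "real K \<le> real t * (real s * ln 2 + 1)"
    unfolding K_def by (rule real_mult_diff_add_le)
  have "(2::real) ^ s = exp (real s * ln 2)" by (simp add: exp_of_nat_mult)
  also have "\<dots> \<le> exp 1 ^ r" using r_gt by (simp flip: exp_of_nat_mult)
  finally have pow_le: "(2::real) ^ s \<le> exp 1 ^ r" .
  have "real n \<le> exp 1 * real K"
  proof (rule le_mult_of_binomial_le_pow_mult_binomial)
    show "1 \<le> r" "r \<le> K" "1 \<le> exp (1::real)" by (simp_all add: r_def K_def)
    assume "K \<le> n"
    then have "real (n choose r) \<le> 2 ^ s * real (K choose r)"
      using bound[of r] unfolding K_def r_def by simp
    also have "\<dots> \<le> exp 1 ^ r * real (K choose r)"
      using pow_le by (rule mult_right_mono) simp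
    finally show "real (n choose r) \<le> exp 1 ^ r * real (K choose r)" .
  qed
  also have "\<dots> \<le> exp 1 * (real t * (real s * ln 2 + 1))"
    using K_le by (intro mult_left_mono) auto
  finally show ?thesis by (simp add: mult.assoc)
qed

lemma n_le_exp_mult_of_binomial_bound:
  assumes "1 \<le> t" "1 \<le> n"
    and bound: "\<And>r. 1 \<le> r \<Longrightarrow> r \<le> n \<Longrightarrow>
      real (n choose r) \<le> 2 ^ s * real (r * t - s + r choose r)"
  shows "real n \<le> exp 1 * real t * (real s * ln 2 + 1)"
proof (cases "s \<le> 3")
  case True
  then show ?thesis using assms by (rule n_le_exp_mult_of_binomial_bound_small)
next
  case False
  then have "4 \<le> s" by simp
  then show ?thesis using assms(1) bound by (rule n_le_exp_mult_of_binomial_bound_large)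
qed

lemma n_le_two_mult_of_binomial_bound:
  assumes "0 < s" "1 \<le> t"
    and bound: "\<And>r. 1 \<le> r \<Longrightarrow> r \<le> n \<Longrightarrow>
      real (n choose r) \<le> 2 ^ s * real (r * t - s + r choose r)"
  shows "real n \<le> 2 * real s * real t"
proof -
  have "s \<le> s * t" using assms(2) by simp
  have "real n \<le> 2 * real (s * t)"
  proof (rule le_mult_of_binomial_le_pow_mult_binomial)
    show "1 \<le> s" "s \<le> s * t" "1 \<le> (2::real)" using assms(1) \<open>s \<le> s * t\<close> by simp_all
    assume "s * t \<le> n"
    then show "real (n choose s) \<le> 2 ^ s * real (s * t choose s)"
      using bound[of s] assms(1) \<open>s \<le> s * t\<close> by simp
  qed
  then show ?thesis by simp
qed

theorem mainTheorem8:
  fixes n s t :: nat and R :: "nat set \<Rightarrow> bool list \<Rightarrow> bool"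
  assumes "n \<ge> 2"
    and "\<forall>S B. R S B \<longrightarrow> S \<subseteq> {1..n} \<and> length B = n + s"
    and "\<forall>S. S \<subseteq> {1..n} \<longrightarrow> (\<exists>B. R S B)"
    and "\<forall>S B. R S B \<longrightarrow> (\<forall>l\<in>{1..n}. B ! (l - 1) \<longleftrightarrow> l \<in> S)"
    and "\<forall>r\<in>{1..n}. \<exists>T :: nat set dtree. \<forall>S B.
           S \<subseteq> {1..n} \<and> card S = r \<and> R S B \<longrightarrow> dt_probes T B \<le> r * t \<and> dt_out T B = S"
  shows "(real s + 1 / ln 2) * real t \<ge> real n / (exp 1 * ln 2) \<and>
         (s > 0 \<longrightarrow> real s * real t \<ge> real n / 2)"
proof -
  have probe: "n choose r \<le> probe_bound (r * t) r s" if "1 \<le> r" "r \<le> n" for r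
  proof -
    from that have "r \<in> {1..n}" by simp
    then obtain T :: "nat set dtree" where "\<forall>S B. S \<subseteq> {1..n} \<and> card S = r \<and> R S B \<longrightarrow>
        dt_probes T B \<le> r * t \<and> dt_out T B = S"
      using assms(5) by blast
    then show ?thesis by (rule binomial_le_probe_bound[OF assms(2-4)])
  qed
  have "1 \<le> t"
    using probe[of 1] assms(1) by (cases t) auto
  have bound: "real (n choose r) \<le> 2 ^ s * real (r * t - s + r choose r)" if "1 \<le> r" "r \<le> n" for r
    using of_nat_mono[OF order_trans[OF probe[OF that] probe_bound_le], where 'a = real] by simp
  have "real n \<le> exp 1 * real t * (real s * ln 2 + 1)"
    using \<open>1 \<le> t\<close> _ bound by (rule n_le_exp_mult_of_binomial_bound) (use assms(1) in simp)
  then have "real n / (exp 1 * ln 2) \<le> (real s + 1 / ln 2) * real t"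
    by (simp add: field_simps)
  moreover have "s > 0 \<longrightarrow> real n / 2 \<le> real s * real t"
    using n_le_two_mult_of_binomial_bound[OF _ \<open>1 \<le> t\<close> bound] by auto
  ultimately show ?thesis by blast
qed

end
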